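(* Let $G$ be an infinite discrete countable group, $(X,G)$ a $G$-system with metric $d$, $\gamma\in(0,1)$ and $K\in\mathbb{N}\setminus\{1\}$. Assume there is $\epsilon>0$ such that for every $M\in\mathbb{N}$ and all nonempty open subsets $U_1,\dots,U_M$ of $X$ there exist $g\in G$, $\mathcal{M}\subset\{1,\dots,M\}$ and points $x_{m,k}\in U_m$ for $k\in\{1,\dots,K\}$, $m\in\mathcal{M}$, such that (1) $|\mathcal{M}|\ge(1-\gamma)M$; (2) $d(gx_{m,k},gx_{m,k'})>\epsilon$ for all $1\le k<k'\le K$ and $m\in\mathcal{M}$. Then $h^*_{top}(X,G)\ge\log((1-\gamma)K)$.
   Context: A $G$-system is a compact metric space $(X,d)$ on which $G$ acts by homeomorphisms. For a sequence $\mathcal{A}=(g_n)$ in $G$ and a finite open cover $\mathcal{U}$, $h_{top}^{\mathcal{A}}(G,\mathcal{U})=\limsup_n\frac1n\log N(\bigvee_{i=1}^ng_i^{-1}\mathcal{U})$ ($N$ = minimal cardinality of a subcover), $h^{\mathcal{A}}_{top}(X,G)=\sup_{\mathcal{U}}h^{\mathcal{A}}_{top}(G,\mathcal{U})$, and $h^*_{top}(X,G)=\sup_{\mathcal{A}}h^{\mathcal{A}}_{top}(X,G)$ over all sequences in $G$. *)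

theory Defs
  imports "HOL-Analysis.Analysis" "HOL-Algebra.Group"
begin

text \<open>A G-system: a compact metric space X (a compact subset of a metric space type)
  on which the group G acts by homeomorphisms (each act g is continuous on X and maps X
  into X; the action laws make act g a homeomorphism with inverse act (inv g)).\<close>
definition G_system :: "('g, 'b) monoid_scheme \<Rightarrow> ('g \<Rightarrow> 'a::metric_space \<Rightarrow> 'a) \<Rightarrow> 'a set \<Rightarrow> bool" where
  "G_system G act X \<longleftrightarrow> group G \<and> compact X \<and>
     (\<forall>g\<in>carrier G. act g ` X \<subseteq> X \<and> continuous_on X (act g)) \<and>
     (\<forall>x\<in>X. act \<one>\<^bsub>G\<^esub> x = x) \<and>
     (\<forall>g\<in>carrier G. \<forall>h\<in>carrier G. \<forall>x\<in>X. act (g \<otimes>\<^bsub>G\<^esub> h) x = act g (act h x))"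

definition open_cover :: "'a::metric_space set \<Rightarrow> 'a set set \<Rightarrow> bool" where
  "open_cover X \<U> \<longleftrightarrow> finite \<U> \<and> (\<forall>U\<in>\<U>. openin (top_of_set X) U) \<and> \<Union>\<U> = X"

definition Ncov :: "'a set \<Rightarrow> 'a set set \<Rightarrow> nat" where
  "Ncov X \<V> = (LEAST n. \<exists>\<W>. \<W> \<subseteq> \<V> \<and> finite \<W> \<and> X \<subseteq> \<Union>\<W> \<and> card \<W> = n)"

definition join_cover :: "('g \<Rightarrow> 'a \<Rightarrow> 'a) \<Rightarrow> 'a set \<Rightarrow> (nat \<Rightarrow> 'g) \<Rightarrow> 'a set set \<Rightarrow> nat \<Rightarrow> 'a set set" where
  "join_cover act X gs \<U> n =
     {X \<inter> (\<Inter>i\<in>{1..n}. {x\<in>X. act (gs i) x \<in> V i}) | V. \<forall>i\<in>{1..n}. V i \<in> \<U>}"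

definition seq_entropy_cover :: "('g \<Rightarrow> 'a \<Rightarrow> 'a) \<Rightarrow> 'a set \<Rightarrow> (nat \<Rightarrow> 'g) \<Rightarrow> 'a set set \<Rightarrow> ereal" where
  "seq_entropy_cover act X gs \<U> =
     limsup (\<lambda>n. ereal (ln (real (Ncov X (join_cover act X gs \<U> n))) / real n))"

definition seq_entropy :: "('g \<Rightarrow> 'a::metric_space \<Rightarrow> 'a) \<Rightarrow> 'a set \<Rightarrow> (nat \<Rightarrow> 'g) \<Rightarrow> ereal" where
  "seq_entropy act X gs = (SUP \<U>\<in>{\<U>. open_cover X \<U>}. seq_entropy_cover act X gs \<U>)"

definition sup_seq_entropy :: "('g, 'b) monoid_scheme \<Rightarrow> ('g \<Rightarrow> 'a::metric_space \<Rightarrow> 'a) \<Rightarrow> 'a set \<Rightarrow> ereal" where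
  "sup_seq_entropy G act X = (SUP gs\<in>{gs. \<forall>n. gs n \<in> carrier G}. seq_entropy act X gs)"

end

theory Submission
  imports Defs
begin

(* Starting from {X}, one builds families of at least ((1 - \<gamma>) K)^n pairwise disjoint nonempty
   open sets, any two distinct members of which are \<epsilon>-separated by one of g_1, ..., g_n: the
   hypothesis, applied to the current family, supplies g_(n+1) and splits a (1 - \<gamma>)-proportion
   of its members into K small neighbourhoods of points that g_(n+1) separates. An element of
   g_1^(-1) U \<or> ... \<or> g_n^(-1) U, for a cover U by sets of diameter at most \<epsilon>, meets at most one
   member of such a family, so the entropy along (g_n) is at least log((1 - \<gamma>) K). *)

definition separated :: "('g \<Rightarrow> 'a::metric_space \<Rightarrow> 'a) \<Rightarrow> 'g \<Rightarrow> real \<Rightarrow> 'a set \<Rightarrow> 'a set \<Rightarrow> bool" where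
  "separated act g e A B \<longleftrightarrow> (\<forall>y\<in>A. \<forall>z\<in>B. e < dist (act g y) (act g z))"

definition separated_family ::
    "('g \<Rightarrow> 'a::metric_space \<Rightarrow> 'a) \<Rightarrow> (nat \<Rightarrow> 'g) \<Rightarrow> real \<Rightarrow> nat \<Rightarrow> 'a set set \<Rightarrow> bool" where
  "separated_family act gs e n W \<longleftrightarrow>
     (\<forall>A\<in>W. \<forall>B\<in>W. A \<noteq> B \<longrightarrow> (\<exists>i\<in>{1..n}. separated act (gs i) e A B))"

definition separating_refinement ::
    "('g \<Rightarrow> 'a::metric_space \<Rightarrow> 'a) \<Rightarrow> 'g \<Rightarrow> real \<Rightarrow> 'a set set \<Rightarrow> 'a set set \<Rightarrow> bool" where
  "separating_refinement act g e W W' \<longleftrightarrow>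
     (\<forall>A\<in>W'. \<forall>B\<in>W'. A \<noteq> B \<longrightarrow>
        (\<exists>A0\<in>W. \<exists>B0\<in>W. A0 \<noteq> B0 \<and> A \<subseteq> A0 \<and> B \<subseteq> B0) \<or> separated act g e A B)"

definition nonempty_open_family :: "'a::topological_space set \<Rightarrow> 'a set set \<Rightarrow> bool" where
  "nonempty_open_family X W \<longleftrightarrow> finite W \<and> (\<forall>A\<in>W. openin (top_of_set X) A \<and> A \<noteq> {})"

definition proportional_separation ::
    "('g, 'b) monoid_scheme \<Rightarrow> ('g \<Rightarrow> 'a::metric_space \<Rightarrow> 'a) \<Rightarrow> 'a set \<Rightarrow> real \<Rightarrow> nat \<Rightarrow> real \<Rightarrow> bool"
  where
  "proportional_separation G act X \<gamma> K \<epsilon> \<longleftrightarrow>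
     (\<forall>M::nat. \<forall>U::nat \<Rightarrow> 'a set.
        (\<forall>m\<in>{1..M}. openin (top_of_set X) (U m) \<and> U m \<noteq> {}) \<longrightarrow>
        (\<exists>g\<in>carrier G. \<exists>\<M>. \<exists>x::nat \<Rightarrow> nat \<Rightarrow> 'a.
           \<M> \<subseteq> {1..M} \<and>
           (\<forall>m\<in>\<M>. \<forall>k\<in>{1..K}. x m k \<in> U m) \<and>
           real (card \<M>) \<ge> (1 - \<gamma>) * real M \<and>
           (\<forall>m\<in>\<M>. \<forall>k\<in>{1..K}. \<forall>k'\<in>{1..K}. k < k' \<longrightarrow>
              dist (act g (x m k)) (act g (x m k')) > \<epsilon>)))"

lemma separated_disjoint: "0 \<le> e \<Longrightarrow> separated act g e A B \<Longrightarrow> A \<inter> B = {}"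
  unfolding separated_def by (metis IntE dist_self equals0I not_less)

lemma separated_sym: "separated act g e A B \<Longrightarrow> separated act g e B A"
  unfolding separated_def by (metis dist_commute)

lemma separated_subset: "separated act g e A B \<Longrightarrow> A' \<subseteq> A \<Longrightarrow> B' \<subseteq> B \<Longrightarrow> separated act g e A' B'"
  unfolding separated_def by blast

lemma separated_family_Suc:
  assumes "separated_family act gs e n W" and "separating_refinement act (gs (Suc n)) e W W'"
  shows "separated_family act gs e (Suc n) W'"
  unfolding separated_family_def
proof (intro ballI impI)
  fix A B assume "A \<in> W'" "B \<in> W'" "A \<noteq> B"
  then have "(\<exists>A0\<in>W. \<exists>B0\<in>W. A0 \<noteq> B0 \<and> A \<subseteq> A0 \<and> B \<subseteq> B0) \<or> separated act (gs (Suc n)) e A B"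
    using assms(2) unfolding separating_refinement_def by simp
  then show "\<exists>i\<in>{1..Suc n}. separated act (gs i) e A B"
  proof
    assume "\<exists>A0\<in>W. \<exists>B0\<in>W. A0 \<noteq> B0 \<and> A \<subseteq> A0 \<and> B \<subseteq> B0"
    then obtain A0 B0 where "A0 \<in> W" "B0 \<in> W" "A0 \<noteq> B0" and sub: "A \<subseteq> A0" "B \<subseteq> B0"
      by blast
    with assms(1) obtain i where "i \<in> {1..n}" "separated act (gs i) e A0 B0"
      unfolding separated_family_def by blast
    with sub show ?thesis by (meson separated_subset atLeastAtMost_iff le_SucI)
  next
    assume "separated act (gs (Suc n)) e A B"
    then show ?thesis by (intro bexI[of _ "Suc n"]) auto
  qed
qed

lemma separating_refinement_disjoint:
  assumes "0 \<le> e" and "disjoint W" and "separating_refinement act g e W W'"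
  shows "disjoint W'"
  unfolding disjoint_def
proof (intro ballI impI)
  fix A B assume "A \<in> W'" "B \<in> W'" "A \<noteq> B"
  then have "(\<exists>A0\<in>W. \<exists>B0\<in>W. A0 \<noteq> B0 \<and> A \<subseteq> A0 \<and> B \<subseteq> B0) \<or> separated act g e A B"
    using assms(3) unfolding separating_refinement_def by simp
  then show "A \<inter> B = {}"
  proof
    assume "\<exists>A0\<in>W. \<exists>B0\<in>W. A0 \<noteq> B0 \<and> A \<subseteq> A0 \<and> B \<subseteq> B0"
    with \<open>disjoint W\<close> show ?thesis unfolding disjoint_def by blast
  next
    assume "separated act g e A B"
    with \<open>0 \<le> e\<close> show ?thesis by (rule separated_disjoint)
  qed
qed

lemma finite_gap_above:
  fixes S :: "real set"
  assumes "finite S" and "\<forall>s\<in>S. e < s"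
  obtains \<delta> where "0 < \<delta>" and "\<forall>s\<in>S. e + \<delta> < s"
proof
  let ?m = "Min (insert (e + 1) S)"
  have "e < ?m" using assms by simp
  then show "0 < (?m - e) / 2" by simp
  show "\<forall>s\<in>S. e + (?m - e) / 2 < s"
  proof
    fix s assume "s \<in> S"
    then have "?m \<le> s" using assms(1) by simp
    with \<open>e < ?m\<close> show "e + (?m - e) / 2 < s" by (simp add: field_simps)
  qed
qed

lemma separated_neighbourhoods:
  assumes "finite I" and "continuous_on X (act g)"
    and "\<And>i. i \<in> I \<Longrightarrow> openin (top_of_set X) (U i) \<and> p i \<in> U i"
    and "\<And>i j. i \<in> I \<Longrightarrow> j \<in> I \<Longrightarrow> R i j \<Longrightarrow> e < dist (act g (p i)) (act g (p j))"
  obtains N where "\<forall>i\<in>I. openin (top_of_set X) (N i) \<and> p i \<in> N i \<and> N i \<subseteq> U i"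
    and "\<forall>i\<in>I. \<forall>j\<in>I. R i j \<longrightarrow> separated act g e (N i) (N j)"
proof -
  let ?S = "(\<lambda>(i, j). dist (act g (p i)) (act g (p j))) ` {(i, j) \<in> I \<times> I. R i j}"
  obtain \<delta> where "0 < \<delta>" and \<delta>: "\<forall>s\<in>?S. e + \<delta> < s"
  proof (rule finite_gap_above[of ?S e])
    have "{(i, j) \<in> I \<times> I. R i j} \<subseteq> I \<times> I" by blast
    then have "finite {(i, j) \<in> I \<times> I. R i j}"
      using finite_cartesian_product[OF assms(1) assms(1)] by (rule finite_subset)
    then show "finite ?S" by (rule finite_imageI)
  qed (use assms(4) in auto)
  define N where "N i = U i \<inter> (X \<inter> act g -` ball (act g (p i)) (\<delta> / 2))" for i
  show ?thesis
  proof (intro that ballI impI)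
    fix i assume "i \<in> I"
    have "openin (top_of_set X) (X \<inter> act g -` ball (act g (p i)) (\<delta> / 2))"
      using continuous_openin_preimage_gen[OF assms(2)] by simp
    with assms(3)[OF \<open>i \<in> I\<close>] \<open>0 < \<delta>\<close> openin_imp_subset
    show "openin (top_of_set X) (N i) \<and> p i \<in> N i \<and> N i \<subseteq> U i"
      unfolding N_def by (auto intro: openin_Int)
  next
    fix i j assume "i \<in> I" "j \<in> I" "R i j"
    then have far: "e + \<delta> < dist (act g (p i)) (act g (p j))" using \<delta> by force
    show "separated act g e (N i) (N j)"
      unfolding separated_def
    proof (intro ballI)
      fix y z assume "y \<in> N i" "z \<in> N j"
      then have "dist (act g (p i)) (act g y) < \<delta> / 2" "dist (act g (p j)) (act g z) < \<delta> / 2"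
        unfolding N_def by auto
      with far show "e < dist (act g y) (act g z)" by metric
    qed
  qed
qed

lemma pieces_distinct_parents_or_separated:
  fixes V :: "'m \<times> 't::linorder \<Rightarrow> 'a::metric_space set"
  assumes "inj_on h M" and "h ` M \<subseteq> W"
    and pieces: "\<And>i. i \<in> M \<times> T \<Longrightarrow> V i \<noteq> {} \<and> V i \<subseteq> h (fst i)"
    and sep: "\<And>i j. i \<in> M \<times> T \<Longrightarrow> j \<in> M \<times> T \<Longrightarrow> fst i = fst j \<and> snd i < snd j \<Longrightarrow>
      separated act g e (V i) (V j)"
    and ij: "i \<in> M \<times> T" "j \<in> M \<times> T" "i \<noteq> j"
  shows "(h (fst i) \<in> W \<and> h (fst j) \<in> W \<and> h (fst i) \<noteq> h (fst j) \<and>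
           V i \<subseteq> h (fst i) \<and> V j \<subseteq> h (fst j)) \<or> separated act g e (V i) (V j)"
proof (cases "fst i = fst j")
  case True
  with ij have "snd i < snd j \<or> snd j < snd i" by (metis neq_iff prod.expand)
  then show ?thesis
  proof
    assume "snd i < snd j"
    with ij True have "separated act g e (V i) (V j)" by (intro sep) simp_all
    then show ?thesis by (rule disjI2)
  next
    assume "snd j < snd i"
    with ij True have "separated act g e (V j) (V i)" by (intro sep) simp_all
    then show ?thesis by (blast intro: separated_sym)
  qed
next
  case False
  have "fst i \<in> M" "fst j \<in> M" using ij by auto
  with False \<open>inj_on h M\<close> \<open>h ` M \<subseteq> W\<close>
  have "h (fst i) \<in> W" "h (fst j) \<in> W" "h (fst i) \<noteq> h (fst j)" by (auto dest: inj_onD)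
  with pieces[OF ij(1)] pieces[OF ij(2)] show ?thesis by blast
qed

lemma card_pieces_separating_refinement:
  fixes V :: "'m \<times> 't::linorder \<Rightarrow> 'a::metric_space set"
  assumes "0 \<le> e" and "disjoint W" and "inj_on h M" and "h ` M \<subseteq> W"
    and pieces: "\<And>i. i \<in> M \<times> T \<Longrightarrow> V i \<noteq> {} \<and> V i \<subseteq> h (fst i)"
    and sep: "\<And>i j. i \<in> M \<times> T \<Longrightarrow> j \<in> M \<times> T \<Longrightarrow> fst i = fst j \<and> snd i < snd j \<Longrightarrow>
      separated act g e (V i) (V j)"
  shows "card (V ` (M \<times> T)) = card M * card T"
    and "separating_refinement act g e W (V ` (M \<times> T))"
proof -
  have split: "(h (fst i) \<in> W \<and> h (fst j) \<in> W \<and> h (fst i) \<noteq> h (fst j) \<and>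
                V i \<subseteq> h (fst i) \<and> V j \<subseteq> h (fst j)) \<or> separated act g e (V i) (V j)"
    if "i \<in> M \<times> T" "j \<in> M \<times> T" "i \<noteq> j" for i j
    using assms(3,4) pieces sep that by (rule pieces_distinct_parents_or_separated)
  have "inj_on V (M \<times> T)"
  proof (rule inj_onI, rule ccontr)
    fix i j assume ij: "i \<in> M \<times> T" "j \<in> M \<times> T" "V i = V j" "i \<noteq> j"
    from split[OF ij(1,2,4)] have "V i \<inter> V j = {}"
    proof
      assume "h (fst i) \<in> W \<and> h (fst j) \<in> W \<and> h (fst i) \<noteq> h (fst j) \<and>
        V i \<subseteq> h (fst i) \<and> V j \<subseteq> h (fst j)"
      with \<open>disjoint W\<close> show ?thesis unfolding disjoint_def by blast
    next
      assume "separated act g e (V i) (V j)"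
      with \<open>0 \<le> e\<close> show ?thesis by (rule separated_disjoint)
    qed
    with \<open>V i = V j\<close> pieces[OF ij(1)] show False by simp
  qed
  then show "card (V ` (M \<times> T)) = card M * card T"
    by (simp add: card_image card_cartesian_product)
  show "separating_refinement act g e W (V ` (M \<times> T))"
    unfolding separating_refinement_def
  proof (intro ballI impI)
    fix A B assume "A \<in> V ` (M \<times> T)" "B \<in> V ` (M \<times> T)" "A \<noteq> B"
    then obtain i j where ij: "i \<in> M \<times> T" "j \<in> M \<times> T" "i \<noteq> j" and "A = V i" "B = V j"
      by auto
    with split[OF ij] show "(\<exists>A0\<in>W. \<exists>B0\<in>W. A0 \<noteq> B0 \<and> A \<subseteq> A0 \<and> B \<subseteq> B0) \<or> separated act g e A B"
      by blast
  qed
qed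

lemma proportional_separating_refinement:
  assumes G: "G_system G act X" and "0 < e" and sep: "proportional_separation G act X \<gamma> K e"
    and W: "nonempty_open_family X W" "disjoint W"
  obtains g W' where "g \<in> carrier G" and "nonempty_open_family X W'" and "disjoint W'"
    and "(1 - \<gamma>) * K * card W \<le> card W'" and "separating_refinement act g e W W'"
proof -
  obtain h where h: "bij_betw h {1..card W} W"
    using ex_bij_betw_nat_finite_1 W(1) unfolding nonempty_open_family_def by blast
  then have "\<forall>m\<in>{1..card W}. openin (top_of_set X) (h m) \<and> h m \<noteq> {}"
    using W(1) unfolding nonempty_open_family_def bij_betw_def by auto
  from sep[unfolded proportional_separation_def, THEN spec[of _ "card W"], THEN spec[of _ h],
      THEN mp, OF this]
  obtain g \<M> x where g: "g \<in> carrier G" and \<M>: "\<M> \<subseteq> {1..card W}"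
    and x: "\<forall>m\<in>\<M>. \<forall>k\<in>{1..K}. x m k \<in> h m"
    and card_\<M>: "(1 - \<gamma>) * card W \<le> card \<M>"
    and far: "\<forall>m\<in>\<M>. \<forall>k\<in>{1..K}. \<forall>k'\<in>{1..K}. k < k' \<longrightarrow>
                e < dist (act g (x m k)) (act g (x m k'))"
    by blast
  have "inj_on h \<M>" and "h ` \<M> \<subseteq> W"
    using h \<M> unfolding bij_betw_def by (auto intro: inj_on_subset)
  let ?I = "\<M> \<times> {1..K}"
  have "finite ?I" using finite_subset[OF \<M>] by simp
  moreover have "continuous_on X (act g)" using G g unfolding G_system_def by blast
  moreover have "openin (top_of_set X) (h (fst i)) \<and> x (fst i) (snd i) \<in> h (fst i)"
    if "i \<in> ?I" for i
    using that x \<open>h ` \<M> \<subseteq> W\<close> W(1) unfolding nonempty_open_family_def by auto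
  moreover have "e < dist (act g (x (fst i) (snd i))) (act g (x (fst j) (snd j)))"
    if ij: "i \<in> ?I" "j \<in> ?I" and "fst i = fst j \<and> snd i < snd j" for i j
  proof -
    obtain m k k' where "i = (m, k)" "j = (m, k')" and "k < k'"
      using \<open>fst i = fst j \<and> snd i < snd j\<close> by (cases i, cases j) auto
    with ij far show ?thesis by auto
  qed
  ultimately obtain N
    where N: "\<forall>i\<in>?I. openin (top_of_set X) (N i) \<and> x (fst i) (snd i) \<in> N i \<and> N i \<subseteq> h (fst i)"
    and N_sep: "\<forall>i\<in>?I. \<forall>j\<in>?I. fst i = fst j \<and> snd i < snd j \<longrightarrow> separated act g e (N i) (N j)"
    by (rule separated_neighbourhoods)
  have "N i \<noteq> {} \<and> N i \<subseteq> h (fst i)" if "i \<in> ?I" for i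
    using bspec[OF N that] by blast
  note pieces = card_pieces_separating_refinement[OF less_imp_le[OF \<open>0 < e\<close>] W(2)
      \<open>inj_on h \<M>\<close> \<open>h ` \<M> \<subseteq> W\<close> this N_sep[rule_format]]
  have "nonempty_open_family X (N ` ?I)"
    using \<open>finite ?I\<close> N unfolding nonempty_open_family_def by fast
  moreover have "disjoint (N ` ?I)"
    using less_imp_le[OF \<open>0 < e\<close>] W(2) pieces(2) by (rule separating_refinement_disjoint)
  moreover have "(1 - \<gamma>) * K * card W \<le> card (N ` ?I)"
    using mult_right_mono[OF card_\<M>, of K] by (simp add: pieces(1) mult_ac)
  ultimately show ?thesis using pieces(2) by (rule that[OF g])
qed

lemma refinement_sequence_exists:
  assumes G: "G_system G act X" and "X \<noteq> {}" and "0 < e"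
    and sep: "proportional_separation G act X \<gamma> K e"
  obtains gs Ws where "Ws 0 = {X}" and "\<forall>n. gs n \<in> carrier G"
    and "\<forall>n. nonempty_open_family X (Ws n)"
    and "\<forall>n. (1 - \<gamma>) * K * card (Ws n) \<le> card (Ws (Suc n))"
    and "\<forall>n. separating_refinement act (gs (Suc n)) e (Ws n) (Ws (Suc n))"
proof -
  let ?good = "\<lambda>W. nonempty_open_family X W \<and> disjoint W"
  have "\<exists>g W'. ?good W \<longrightarrow> g \<in> carrier G \<and> ?good W' \<and> (1 - \<gamma>) * K * card W \<le> card W' \<and>
          separating_refinement act g e W W'" for W
    using proportional_separating_refinement[OF G \<open>0 < e\<close> sep] by metis
  then obtain next_g next_W where step: "\<And>W. ?good W \<Longrightarrow>
      next_g W \<in> carrier G \<and> ?good (next_W W) \<and> (1 - \<gamma>) * K * card W \<le> card (next_W W) \<and>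
      separating_refinement act (next_g W) e W (next_W W)"
    by metis
  define Ws where "Ws n = (next_W ^^ n) {X}" for n
  \<comment> \<open>\<open>gs 0\<close> is a dummy: \<open>join_cover\<close> only uses \<open>gs 1, gs 2, \<dots>\<close>\<close>
  define gs where "gs n = (case n of 0 \<Rightarrow> \<one>\<^bsub>G\<^esub> | Suc m \<Rightarrow> next_g (Ws m))" for n
  have Ws_0: "Ws 0 = {X}" and Ws_Suc: "Ws (Suc n) = next_W (Ws n)"
    and gs_Suc: "gs (Suc n) = next_g (Ws n)" for n
    unfolding Ws_def gs_def by simp_all
  have good: "?good (Ws n)" for n
  proof (induction n)
    case 0
    show ?case using \<open>X \<noteq> {}\<close> unfolding Ws_0 nonempty_open_family_def disjoint_def by simp
  next
    case (Suc n)
    then show ?case using step unfolding Ws_Suc by blast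
  qed
  have step_n: "gs (Suc n) \<in> carrier G" "(1 - \<gamma>) * K * card (Ws n) \<le> card (Ws (Suc n))"
    "separating_refinement act (gs (Suc n)) e (Ws n) (Ws (Suc n))" for n
    using step[OF good[of n]] unfolding Ws_Suc gs_Suc by simp_all
  have "gs n \<in> carrier G" for n
  proof (cases n)
    case 0
    with G show ?thesis
      unfolding gs_def G_system_def by (simp add: group.is_monoid monoid.one_closed)
  qed (simp add: step_n(1))
  then show ?thesis by (intro that[of Ws gs, OF Ws_0]) (simp_all add: good step_n(2,3))
qed

lemma separated_families_exist:
  assumes "G_system G act X" and "X \<noteq> {}" and "0 < e" and "\<gamma> \<le> 1"
    and "proportional_separation G act X \<gamma> K e"
  obtains gs where "\<forall>n. gs n \<in> carrier G"
    and "\<forall>n. \<exists>W. nonempty_open_family X W \<and> ((1 - \<gamma>) * K) ^ n \<le> card W \<and>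
                 separated_family act gs e n W"
proof -
  obtain gs Ws where Ws_0: "Ws 0 = {X}" and gs: "\<forall>n. gs n \<in> carrier G"
    and open_Ws: "\<forall>n. nonempty_open_family X (Ws n)"
    and grow: "\<forall>n. (1 - \<gamma>) * K * card (Ws n) \<le> card (Ws (Suc n))"
    and refine: "\<forall>n. separating_refinement act (gs (Suc n)) e (Ws n) (Ws (Suc n))"
    by (rule refinement_sequence_exists[OF assms(1,2,3,5)])
  have pow: "((1 - \<gamma>) * K) ^ n \<le> card (Ws n)" for n
  proof (induction n)
    case 0
    show ?case unfolding Ws_0 by simp
  next
    case (Suc n)
    have "((1 - \<gamma>) * K) ^ Suc n = (1 - \<gamma>) * K * ((1 - \<gamma>) * K) ^ n" by simp
    also have "\<dots> \<le> (1 - \<gamma>) * K * card (Ws n)"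
      using Suc.IH \<open>\<gamma> \<le> 1\<close> by (intro mult_left_mono) simp_all
    also have "\<dots> \<le> card (Ws (Suc n))" using grow by simp
    finally show ?case .
  qed
  have fam: "separated_family act gs e n (Ws n)" for n
  proof (induction n)
    case 0
    show ?case unfolding Ws_0 separated_family_def by simp
  next
    case (Suc n)
    from Suc.IH refine[rule_format, of n] show ?case by (rule separated_family_Suc)
  qed
  have "\<exists>W. nonempty_open_family X W \<and> ((1 - \<gamma>) * K) ^ n \<le> card W \<and> separated_family act gs e n W"
    for n using open_Ws pow[of n] fam[of n] by (intro exI[of _ "Ws n"]) simp
  with gs show ?thesis by (intro that) auto
qed

lemma Ncov_attained:
  assumes "finite \<V>" and "X \<subseteq> \<Union>\<V>"
  obtains \<W> where "\<W> \<subseteq> \<V>" and "X \<subseteq> \<Union>\<W>" and "card \<W> = Ncov X \<V>"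
proof -
  have "\<exists>n \<W>. \<W> \<subseteq> \<V> \<and> finite \<W> \<and> X \<subseteq> \<Union>\<W> \<and> card \<W> = n" using assms by blast
  then have "\<exists>\<W>. \<W> \<subseteq> \<V> \<and> finite \<W> \<and> X \<subseteq> \<Union>\<W> \<and> card \<W> = Ncov X \<V>"
    unfolding Ncov_def by (rule LeastI_ex)
  then show ?thesis using that by blast
qed

lemma card_le_Ncov:
  assumes "finite \<V>" and "X \<subseteq> \<Union>\<V>" and "\<forall>A\<in>W. A \<noteq> {} \<and> A \<subseteq> X"
    and meets_one: "\<And>V A B. V \<in> \<V> \<Longrightarrow> A \<in> W \<Longrightarrow> B \<in> W \<Longrightarrow> V \<inter> A \<noteq> {} \<Longrightarrow> V \<inter> B \<noteq> {} \<Longrightarrow> A = B"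
  shows "card W \<le> Ncov X \<V>"
proof -
  obtain \<W> where "\<W> \<subseteq> \<V>" and "X \<subseteq> \<Union>\<W>" and card_\<W>: "card \<W> = Ncov X \<V>"
    using Ncov_attained[OF assms(1,2)] .
  have "\<exists>V\<in>\<W>. V \<inter> A \<noteq> {}" if "A \<in> W" for A
  proof -
    obtain a where "a \<in> A" "a \<in> X" using assms(3) \<open>A \<in> W\<close> by blast
    then obtain V where "V \<in> \<W>" "a \<in> V" using \<open>X \<subseteq> \<Union>\<W>\<close> by blast
    then show ?thesis using \<open>a \<in> A\<close> by blast
  qed
  then obtain f where f: "\<And>A. A \<in> W \<Longrightarrow> f A \<in> \<W> \<and> f A \<inter> A \<noteq> {}" by metis
  have "inj_on f W"
  proof (rule inj_onI)
    fix A B assume "A \<in> W" "B \<in> W" "f A = f B"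
    then have "f A \<in> \<V>" "f A \<inter> A \<noteq> {}" "f A \<inter> B \<noteq> {}"
      using f[of A] f[of B] \<open>\<W> \<subseteq> \<V>\<close> by (metis subsetD)+
    then show "A = B" using meets_one \<open>A \<in> W\<close> \<open>B \<in> W\<close> by blast
  qed
  moreover have "f ` W \<subseteq> \<W>" using f by auto
  moreover have "finite \<W>" using \<open>\<W> \<subseteq> \<V>\<close> assms(1) by (rule finite_subset)
  ultimately have "card W \<le> card \<W>" by (rule card_inj_on_le)
  with card_\<W> show ?thesis by simp
qed

lemma join_cover_finite:
  assumes "finite \<U>"
  shows "finite (join_cover act X gs \<U> n)"
proof -
  let ?f = "\<lambda>V. X \<inter> (\<Inter>i\<in>{1..n}. {x\<in>X. act (gs i) x \<in> V i})"
  have "join_cover act X gs \<U> n \<subseteq> ?f ` (PiE {1..n} (\<lambda>_. \<U>))"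
  proof
    fix S assume "S \<in> join_cover act X gs \<U> n"
    then obtain V where S: "S = ?f V" and V: "\<forall>i\<in>{1..n}. V i \<in> \<U>"
      unfolding join_cover_def by blast
    have "S = ?f (restrict V {1..n})" unfolding S by auto
    moreover have "restrict V {1..n} \<in> PiE {1..n} (\<lambda>_. \<U>)" using V by auto
    ultimately show "S \<in> ?f ` (PiE {1..n} (\<lambda>_. \<U>))" by blast
  qed
  moreover have "finite (PiE {1..n} (\<lambda>_. \<U>))" using assms by (simp add: finite_PiE)
  ultimately show ?thesis by (meson finite_imageI finite_subset)
qed

lemma join_cover_covers:
  assumes "\<Union>\<U> = X" and "\<forall>i\<in>{1..n}. act (gs i) ` X \<subseteq> X"
  shows "X \<subseteq> \<Union>(join_cover act X gs \<U> n)"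
proof
  fix x assume "x \<in> X"
  with assms have "\<forall>i\<in>{1..n}. \<exists>U\<in>\<U>. act (gs i) x \<in> U" by blast
  then obtain V where V: "\<forall>i\<in>{1..n}. V i \<in> \<U> \<and> act (gs i) x \<in> V i" by metis
  then have "X \<inter> (\<Inter>i\<in>{1..n}. {y\<in>X. act (gs i) y \<in> V i}) \<in> join_cover act X gs \<U> n"
    unfolding join_cover_def by blast
  moreover have "x \<in> X \<inter> (\<Inter>i\<in>{1..n}. {y\<in>X. act (gs i) y \<in> V i})" using \<open>x \<in> X\<close> V by blast
  ultimately show "x \<in> \<Union>(join_cover act X gs \<U> n)" by blast
qed

lemma join_cover_meets_at_most_one:
  assumes small: "\<forall>U\<in>\<U>. \<forall>a\<in>U. \<forall>b\<in>U. dist a b \<le> e" and sep: "separated_family act gs e n W"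
    and "V \<in> join_cover act X gs \<U> n" and "A \<in> W" and "B \<in> W"
    and "V \<inter> A \<noteq> {}" and "V \<inter> B \<noteq> {}"
  shows "A = B"
proof (rule ccontr)
  assume "A \<noteq> B"
  with sep \<open>A \<in> W\<close> \<open>B \<in> W\<close> obtain i where i: "i \<in> {1..n}" and AB: "separated act (gs i) e A B"
    unfolding separated_family_def by blast
  from assms(3) obtain U where V: "V = X \<inter> (\<Inter>i\<in>{1..n}. {x\<in>X. act (gs i) x \<in> U i})"
    and U: "\<forall>i\<in>{1..n}. U i \<in> \<U>"
    unfolding join_cover_def by blast
  obtain a b where a: "a \<in> V" "a \<in> A" and b: "b \<in> V" "b \<in> B" using assms(6,7) by blast
  then have "act (gs i) a \<in> U i" "act (gs i) b \<in> U i" using i unfolding V by auto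
  then have "dist (act (gs i) a) (act (gs i) b) \<le> e" using small U i by blast
  moreover have "e < dist (act (gs i) a) (act (gs i) b)"
    using AB a b unfolding separated_def by blast
  ultimately show False by linarith
qed

lemma card_le_Ncov_join_cover:
  assumes "finite \<U>" and "\<Union>\<U> = X" and "\<forall>i\<in>{1..n}. act (gs i) ` X \<subseteq> X"
    and "\<forall>U\<in>\<U>. \<forall>a\<in>U. \<forall>b\<in>U. dist a b \<le> e"
    and "\<forall>A\<in>W. A \<noteq> {} \<and> A \<subseteq> X" and "separated_family act gs e n W"
  shows "card W \<le> Ncov X (join_cover act X gs \<U> n)"
  using join_cover_finite[OF assms(1)] join_cover_covers[where act = act and gs = gs, OF assms(2,3)]
    assms(5)
  by (rule card_le_Ncov) (rule join_cover_meets_at_most_one[OF assms(4,6)])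

lemma ln_le_limsup_ln_div:
  fixes N :: "nat \<Rightarrow> real"
  assumes "0 < c" and "\<And>n. c ^ n \<le> N n"
  shows "ereal (ln c) \<le> limsup (\<lambda>n. ereal (ln (N n) / real n))"
proof (rule le_Limsup)
  show "\<forall>\<^sub>F n in sequentially. ereal (ln c) \<le> ereal (ln (N n) / real n)"
    using eventually_gt_at_top[of 0]
  proof eventually_elim
    case (elim n)
    have "real n * ln c = ln (c ^ n)" by (simp add: ln_realpow)
    also have "\<dots> \<le> ln (N n)" using assms by (simp add: ln_mono)
    finally show ?case using elim by (simp add: pos_le_divide_eq mult.commute)
  qed
qed simp

lemma ln_le_seq_entropy_cover:
  fixes c :: real
  assumes "0 < c" and "finite \<U>" and "\<Union>\<U> = X" and "\<forall>n. act (gs n) ` X \<subseteq> X"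
    and "\<forall>U\<in>\<U>. \<forall>a\<in>U. \<forall>b\<in>U. dist a b \<le> e"
    and families:
      "\<forall>n. \<exists>W. nonempty_open_family X W \<and> c ^ n \<le> card W \<and> separated_family act gs e n W"
  shows "ereal (ln c) \<le> seq_entropy_cover act X gs \<U>"
  unfolding seq_entropy_cover_def
proof (rule ln_le_limsup_ln_div[OF \<open>0 < c\<close>])
  fix n
  obtain W where W: "nonempty_open_family X W" "c ^ n \<le> card W" "separated_family act gs e n W"
    using families by blast
  then have "\<forall>A\<in>W. A \<noteq> {} \<and> A \<subseteq> X"
    unfolding nonempty_open_family_def by (meson openin_imp_subset)
  with assms(2-5) W(3) have "card W \<le> Ncov X (join_cover act X gs \<U> n)"
    by (intro card_le_Ncov_join_cover) simp_all
  with W(2) show "c ^ n \<le> real (Ncov X (join_cover act X gs \<U> n))" by linarith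
qed

lemma compact_small_open_cover:
  assumes "compact X" and "0 < e"
  obtains \<U> where "open_cover X \<U>" and "\<forall>U\<in>\<U>. \<forall>a\<in>U. \<forall>b\<in>U. dist a b \<le> e"
proof -
  have "X \<subseteq> \<Union>((\<lambda>c. ball c (e / 2)) ` X)" using \<open>0 < e\<close> by force
  then obtain C where "C \<subseteq> X" and "finite C" and C: "X \<subseteq> \<Union>((\<lambda>c. ball c (e / 2)) ` C)"
    using compactE_image[OF assms(1)] by (metis open_ball)
  define \<U> where "\<U> = (\<lambda>c. X \<inter> ball c (e / 2)) ` C"
  have "open_cover X \<U>"
    unfolding open_cover_def \<U>_def using \<open>finite C\<close> C by (auto simp: openin_open_Int)
  moreover have "\<forall>U\<in>\<U>. \<forall>a\<in>U. \<forall>b\<in>U. dist a b \<le> e"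
  proof (intro ballI)
    fix U a b assume "U \<in> \<U>" "a \<in> U" "b \<in> U"
    then obtain c where "dist c a < e / 2" "dist c b < e / 2" unfolding \<U>_def by auto
    then show "dist a b \<le> e" by metric
  qed
  ultimately show ?thesis using that by blast
qed

theorem proposition3p1:
  fixes G :: "('g, 'b) monoid_scheme" and act :: "'g \<Rightarrow> 'a::metric_space \<Rightarrow> 'a"
    and X :: "'a set" and \<gamma> :: real and K :: nat
  assumes "G_system G act X" and "X \<noteq> {}"
    and "infinite (carrier G)" and "countable (carrier G)"
    and "0 < \<gamma>" and "\<gamma> < 1" and "K \<ge> 2"
    and "\<exists>\<epsilon>>0. \<forall>M::nat. \<forall>U::nat \<Rightarrow> 'a set.
           (\<forall>m\<in>{1..M}. openin (top_of_set X) (U m) \<and> U m \<noteq> {}) \<longrightarrow>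
           (\<exists>g\<in>carrier G. \<exists>\<M>. \<exists>x::nat \<Rightarrow> nat \<Rightarrow> 'a.
              \<M> \<subseteq> {1..M} \<and>
              (\<forall>m\<in>\<M>. \<forall>k\<in>{1..K}. x m k \<in> U m) \<and>
              real (card \<M>) \<ge> (1 - \<gamma>) * real M \<and>
              (\<forall>m\<in>\<M>. \<forall>k\<in>{1..K}. \<forall>k'\<in>{1..K}. k < k' \<longrightarrow>
                 dist (act g (x m k)) (act g (x m k')) > \<epsilon>))"
  shows "sup_seq_entropy G act X \<ge> ereal (ln ((1 - \<gamma>) * real K))"
proof -
  let ?c = "(1 - \<gamma>) * real K"
  have "\<exists>e>0. proportional_separation G act X \<gamma> K e"
    unfolding proportional_separation_def using assms(8) .
  then obtain e where "0 < e" and sep: "proportional_separation G act X \<gamma> K e" by blast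
  have "compact X" using assms(1) unfolding G_system_def by blast
  then obtain \<U> where \<U>: "open_cover X \<U>" and small: "\<forall>U\<in>\<U>. \<forall>a\<in>U. \<forall>b\<in>U. dist a b \<le> e"
    using \<open>0 < e\<close> by (rule compact_small_open_cover)
  have "\<gamma> \<le> 1" using assms(6) by simp
  then obtain gs where gs: "\<forall>n. gs n \<in> carrier G"
    and families:
      "\<forall>n. \<exists>W. nonempty_open_family X W \<and> ?c ^ n \<le> card W \<and> separated_family act gs e n W"
    by (rule separated_families_exist[OF assms(1,2) \<open>0 < e\<close> _ sep])
  have "0 < ?c" using assms(6,7) by simp
  moreover have "\<forall>n. act (gs n) ` X \<subseteq> X" using gs assms(1) unfolding G_system_def by simp
  ultimately have "ereal (ln ?c) \<le> seq_entropy_cover act X gs \<U>"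
    using \<U> small families unfolding open_cover_def by (intro ln_le_seq_entropy_cover) simp_all
  also have "\<dots> \<le> seq_entropy act X gs"
    unfolding seq_entropy_def using \<U> by (simp add: SUP_upper)
  also have "\<dots> \<le> sup_seq_entropy G act X"
    unfolding sup_seq_entropy_def using gs by (simp add: SUP_upper)
  finally show ?thesis .
qed

end
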